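(* Let $n\ge 2$ and let $c=s_{n-1}s_{n-2}\cdots s_2s_1\in S_n$. For every $v\in S_n$ with $v\le c$ in the Bruhat order, one has $\mathcal I_v=\operatorname{in}_{\mathbf w}(\mathcal I_v)$.
   Context: Notation: $[a,b]=\{a,a+1,\dots,b\}$, $[b]=[1,b]$. $S_n$ is the symmetric group with simple reflections $s_i=(i,i+1)$ and Bruhat order $\le$. For $v\in S_n$ and $k\in[n]$ put $v([k])=\{v(1),\dots,v(k)\}$. For $k$-element subsets $I=\{a_1<\dots<a_k\}$, $K=\{b_1<\dots<b_k\}$ of $[n]$ write $I\le K$ iff $a_r\le b_r$ for all $r$. Let $A_n=\mathbb C[p_I : I\subseteq[n],\,1\le |I|\le n-1]$ (Plücker coordinates). For a sequence $I=(i_1,\dots,i_k)$ of pairwise distinct elements of $[n]$ set $p_I=\mathrm{sgn}(\sigma)\,p_{\{i_1,\dots,i_k\}}$, where $\sigma$ is the permutation sorting the sequence increasingly; if a sequence has repeated entries, $p_I=0$. Plücker relations: for sequences $J=(j_1,\dots,j_e)$, $L=(l_1,\dots,l_d)$ of distinct elements of $[n]$ with $1\le e\le d\le n-1$ and $k\in[e]$, $R^k_{J,L}=p_Jp_L-\sum_{1\le r_1<\dots<r_k\le d}p_{J'}p_{L'}$, where $J'$ is obtained from $J$ by replacing $j_t$ by $l_{r_t}$ ($t=1,\dots,k$) and $L'$ is obtained from $L$ by replacing $l_{r_t}$ by $j_t$. $\mathcal I_{\mathrm{Fl}_n}$ is the ideal generated by all $R^k_{J,L}$ (the ideal of the flag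 variety $\mathrm{Fl}_n$ in $\prod_{k=1}^{n-1}\mathbb P(\wedge^k\mathbb C^n)$), and for $v\in S_n$, $\mathcal I_v=\mathcal I_{\mathrm{Fl}_n}+(p_I : I\not\le v([|I|]))$ is the ideal of the Schubert variety $X_v=\overline{BvB/B}$. Weight vector: $\mathbf w_I=\#\{a\in I: |I|\le a\le n-1\}$; the weight of a monomial $\prod p_I^{\alpha_I}$ is $\sum\alpha_I\mathbf w_I$; for $f\in A_n$, $\operatorname{in}_{\mathbf w}(f)$ is the sum of the terms of $f$ of minimal weight, and for an ideal $\mathcal I$, $\operatorname{in}_{\mathbf w}(\mathcal I)$ is the ideal generated by all $\operatorname{in}_{\mathbf w}(f)$, $f\in\mathcal I$. *)

theory Defs
  imports "HOL-Library.Poly_Mapping" "HOL-Combinatorics.Combinatorics" Complex_Main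
begin

definition sref :: "nat \<Rightarrow> nat \<Rightarrow> nat" where
  "sref i = Transposition.transpose i (Suc i)"

definition sprod :: "nat list \<Rightarrow> nat \<Rightarrow> nat" where
  "sprod l = foldr (\<lambda>i f. sref i \<circ> f) l id"

definition coxc :: "nat \<Rightarrow> nat \<Rightarrow> nat" where
  "coxc n = sprod (rev [1..<n])"

definition inv_count :: "nat \<Rightarrow> (nat \<Rightarrow> nat) \<Rightarrow> nat" where
  "inv_count n u = card {(i, j). 1 \<le> i \<and> i < j \<and> j \<le> n \<and> u i > u j}"

definition bruhat_step :: "nat \<Rightarrow> (nat \<Rightarrow> nat) \<Rightarrow> (nat \<Rightarrow> nat) \<Rightarrow> bool" where
  "bruhat_step n u w \<longleftrightarrow> (\<exists>i j. 1 \<le> i \<and> i < j \<and> j \<le> n \<and>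
       w = u \<circ> Transposition.transpose i j \<and> inv_count n u < inv_count n w)"

definition bruhat_le :: "nat \<Rightarrow> (nat \<Rightarrow> nat) \<Rightarrow> (nat \<Rightarrow> nat) \<Rightarrow> bool" where
  "bruhat_le n = (bruhat_step n)\<^sup>*\<^sup>*"

definition gale_le :: "nat set \<Rightarrow> nat set \<Rightarrow> bool" where
  "gale_le I K \<longleftrightarrow> card I = card K \<and>
     (\<forall>r < card I. sorted_list_of_set I ! r \<le> sorted_list_of_set K ! r)"

type_synonym mono = "nat set \<Rightarrow>\<^sub>0 nat"
type_synonym cpoly = "mono \<Rightarrow>\<^sub>0 complex"

definition pvars :: "nat \<Rightarrow> nat set set" where
  "pvars n = {I. I \<subseteq> {1..n} \<and> 1 \<le> card I \<and> card I \<le> n - 1}"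

definition An :: "nat \<Rightarrow> cpoly set" where
  "An n = {f. \<forall>m \<in> Poly_Mapping.keys f. Poly_Mapping.keys m \<subseteq> pvars n}"

definition pvar :: "nat set \<Rightarrow> cpoly" where
  "pvar I = Poly_Mapping.single (Poly_Mapping.single I 1) 1"

definition ideal_gen :: "cpoly set \<Rightarrow> cpoly set \<Rightarrow> cpoly set" where
  "ideal_gen R S = {x. \<exists>F g. finite F \<and> F \<subseteq> S \<and> (\<forall>s\<in>F. g s \<in> R) \<and> x = (\<Sum>s\<in>F. g s * s)}"

text \<open>p_I for a sequence I: sign of the sorting permutation (= (-1)^#inversions) times p_{set I};
  zero if the sequence has repeated entries\<close>
definition list_inv :: "nat list \<Rightarrow> nat" where
  "list_inv l = card {(a, b). a < b \<and> b < length l \<and> l ! a > l ! b}"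

definition pseq :: "nat list \<Rightarrow> cpoly" where
  "pseq l = (if distinct l then (-1) ^ list_inv l * pvar (set l) else 0)"

text \<open>Pluecker relation R^k_{J,L}; R is the set of 0-based positions {r_1 < ... < r_k} in L\<close>
definition Jrep :: "nat list \<Rightarrow> nat list \<Rightarrow> nat \<Rightarrow> nat set \<Rightarrow> nat list" where
  "Jrep J L k R = map (\<lambda>t. L ! (sorted_list_of_set R ! t)) [0..<k] @ drop k J"

definition Lrep :: "nat list \<Rightarrow> nat list \<Rightarrow> nat \<Rightarrow> nat set \<Rightarrow> nat list" where
  "Lrep J L k R = foldr (\<lambda>t l. l[sorted_list_of_set R ! t := J ! t]) [0..<k] L"

definition plucker_rel :: "nat list \<Rightarrow> nat list \<Rightarrow> nat \<Rightarrow> cpoly" where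
  "plucker_rel J L k = pseq J * pseq L -
     (\<Sum>R\<in>{R. R \<subseteq> {0..<length L} \<and> card R = k}. pseq (Jrep J L k R) * pseq (Lrep J L k R))"

definition plucker_rels :: "nat \<Rightarrow> cpoly set" where
  "plucker_rels n = {plucker_rel J L k | J L k.
      distinct J \<and> distinct L \<and> set J \<subseteq> {1..n} \<and> set L \<subseteq> {1..n} \<and>
      1 \<le> length J \<and> length J \<le> length L \<and> length L \<le> n - 1 \<and>
      1 \<le> k \<and> k \<le> length J}"

definition I_Fl :: "nat \<Rightarrow> cpoly set" where
  "I_Fl n = ideal_gen (An n) (plucker_rels n)"

definition I_schubert :: "nat \<Rightarrow> (nat \<Rightarrow> nat) \<Rightarrow> cpoly set" where
  "I_schubert n v = ideal_gen (An n)
     (plucker_rels n \<union> {pvar I | I. I \<in> pvars n \<and> \<not> gale_le I (v ` {1..card I})})"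

definition wvar :: "nat \<Rightarrow> nat set \<Rightarrow> nat" where
  "wvar n I = card {a \<in> I. card I \<le> a \<and> a \<le> n - 1}"

definition wmono :: "nat \<Rightarrow> mono \<Rightarrow> nat" where
  "wmono n m = (\<Sum>I\<in>Poly_Mapping.keys m. Poly_Mapping.lookup m I * wvar n I)"

definition in_w :: "nat \<Rightarrow> cpoly \<Rightarrow> cpoly" where
  "in_w n f = Poly_Mapping.mapp
     (\<lambda>m a. if wmono n m = Min (wmono n ` Poly_Mapping.keys f) then a else 0) f"

definition in_w_ideal :: "nat \<Rightarrow> cpoly set \<Rightarrow> cpoly set" where
  "in_w_ideal n I = ideal_gen (An n) (in_w n ` I)"

end

theory Submission
  imports Defs
begin

text \<open>For v \<le> c one has v([k]) \<supseteq> [k - 1] for all k, a property of c that passes down the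
  Bruhat order. So every Pluecker variable p_I not killed in I_v satisfies I \<le> v([|I|]) and
  hence I \<supseteq> [|I| - 1]; its weight is then 1 if n \<notin> I and 0 if n \<in> I. Consequently all
  monomials of a Pluecker relation R_{J,L} that survive modulo the killed variables have the
  same weight, 2 minus the number of occurrences of n in J and L, and every other weight
  component of R_{J,L} lies in the ideal of killed variables. Hence I_v is generated by
  w-homogeneous polynomials, and such an ideal equals its initial ideal because it contains
  the weight components of each of its elements.\<close>

lemma An_keys_subset: "f \<in> An n \<Longrightarrow> Poly_Mapping.keys g \<subseteq> Poly_Mapping.keys f \<Longrightarrow> g \<in> An n"
  unfolding An_def by blast

lemma An_zero: "0 \<in> An n"
  unfolding An_def by simp

lemma An_one: "1 \<in> An n"
  unfolding An_def by simp

lemma An_uminus: "f \<in> An n \<Longrightarrow> - f \<in> An n"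
  unfolding An_def by simp

lemma An_add: "f \<in> An n \<Longrightarrow> g \<in> An n \<Longrightarrow> f + g \<in> An n"
  unfolding An_def using keys_add[of f g] by blast

lemma An_mult:
  assumes f: "f \<in> An n" and g: "g \<in> An n"
  shows "f * g \<in> An n"
  unfolding An_def
proof (intro CollectI ballI)
  fix m assume "m \<in> Poly_Mapping.keys (f * g)"
  then obtain a b where "m = a + b" "a \<in> Poly_Mapping.keys f" "b \<in> Poly_Mapping.keys g"
    using keys_mult[of f g] by auto
  then show "Poly_Mapping.keys m \<subseteq> pvars n"
    using f g keys_add[of a b] unfolding An_def by blast
qed

lemma ideal_gen_zero: "0 \<in> ideal_gen R S"
  unfolding ideal_gen_def by (auto intro!: exI[of _ "{}"])

lemma ideal_gen_mult_generator: "s \<in> S \<Longrightarrow> g \<in> R \<Longrightarrow> g * s \<in> ideal_gen R S"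
  unfolding ideal_gen_def by (auto intro!: exI[of _ "{s}"] exI[of _ "\<lambda>_. g"])

lemma generator_in_ideal_gen: "s \<in> S \<Longrightarrow> s \<in> ideal_gen (An n) S"
  using ideal_gen_mult_generator[OF _ An_one, of s S n] by simp

lemma ideal_gen_add:
  assumes "a \<in> ideal_gen (An n) S" "b \<in> ideal_gen (An n) S"
  shows "a + b \<in> ideal_gen (An n) S"
proof -
  obtain F g where F: "finite F" "F \<subseteq> S" "\<forall>s\<in>F. g s \<in> An n" "a = (\<Sum>s\<in>F. g s * s)"
    using assms(1) unfolding ideal_gen_def by blast
  obtain G h where G: "finite G" "G \<subseteq> S" "\<forall>s\<in>G. h s \<in> An n" "b = (\<Sum>s\<in>G. h s * s)"
    using assms(2) unfolding ideal_gen_def by blast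
  define k where "k s = (if s \<in> F then g s else 0) + (if s \<in> G then h s else 0)" for s
  have "(\<Sum>s\<in>F \<union> G. k s * s)
      = (\<Sum>s\<in>F \<union> G. if s \<in> F then g s * s else 0) + (\<Sum>s\<in>F \<union> G. if s \<in> G then h s * s else 0)"
    unfolding sum.distrib[symmetric] by (rule sum.cong) (auto simp: k_def distrib_right)
  also have "\<dots> = a + b"
    using F G by (simp add: sum.If_cases Int_absorb1 Int_absorb2)
  finally have "a + b = (\<Sum>s\<in>F \<union> G. k s * s)" by simp
  moreover have "\<forall>s\<in>F \<union> G. k s \<in> An n"
    using F G unfolding k_def by (auto intro!: An_add An_zero)
  ultimately show ?thesis
    unfolding ideal_gen_def using F G by (intro CollectI exI[of _ "F \<union> G"] exI[of _ k]) auto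
qed

lemma ideal_gen_mult:
  assumes "a \<in> ideal_gen (An n) S" "h \<in> An n"
  shows "h * a \<in> ideal_gen (An n) S"
proof -
  obtain F g where F: "finite F" "F \<subseteq> S" "\<forall>s\<in>F. g s \<in> An n" "a = (\<Sum>s\<in>F. g s * s)"
    using assms(1) unfolding ideal_gen_def by blast
  have "h * a = (\<Sum>s\<in>F. (h * g s) * s)"
    using F(4) by (simp add: sum_distrib_left mult.assoc)
  then show ?thesis
    unfolding ideal_gen_def using F assms(2) An_mult
    by (intro CollectI exI[of _ F] exI[of _ "\<lambda>s. h * g s"]) auto
qed

lemma ideal_gen_diff:
  assumes "a \<in> ideal_gen (An n) S" "b \<in> ideal_gen (An n) S"
  shows "a - b \<in> ideal_gen (An n) S"
  using ideal_gen_add[OF assms(1) ideal_gen_mult[OF assms(2) An_uminus[OF An_one]]] by simp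

lemma ideal_gen_sum:
  "finite A \<Longrightarrow> (\<And>x. x \<in> A \<Longrightarrow> f x \<in> ideal_gen (An n) S) \<Longrightarrow> (\<Sum>x\<in>A. f x) \<in> ideal_gen (An n) S"
  by (induction A rule: finite_induct) (auto intro: ideal_gen_add ideal_gen_zero)

lemma ideal_gen_subset_ideal_gen:
  assumes "S \<subseteq> ideal_gen (An n) T"
  shows "ideal_gen (An n) S \<subseteq> ideal_gen (An n) T"
proof
  fix x assume "x \<in> ideal_gen (An n) S"
  then obtain F g where F: "finite F" "F \<subseteq> S" "\<forall>s\<in>F. g s \<in> An n" "x = (\<Sum>s\<in>F. g s * s)"
    unfolding ideal_gen_def by blast
  show "x \<in> ideal_gen (An n) T"
    unfolding F(4) using F assms by (intro ideal_gen_sum ideal_gen_mult) auto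
qed

lemma monomial_expansion: "p = (\<Sum>m\<in>Poly_Mapping.keys p. Poly_Mapping.single m (Poly_Mapping.lookup p m))"
proof (rule poly_mapping_eqI)
  fix x
  have "(\<Sum>m\<in>Poly_Mapping.keys p. Poly_Mapping.lookup (Poly_Mapping.single m (Poly_Mapping.lookup p m)) x)
      = Poly_Mapping.lookup p x"
    by (simp add: lookup_single when_def in_keys_iff)
  then show "Poly_Mapping.lookup p x
      = Poly_Mapping.lookup (\<Sum>m\<in>Poly_Mapping.keys p. Poly_Mapping.single m (Poly_Mapping.lookup p m)) x"
    by (simp add: lookup_sum)
qed

lemma single_eq_single_mult_pvar:
  assumes "I \<in> Poly_Mapping.keys m"
  shows "Poly_Mapping.single m c = Poly_Mapping.single (m - Poly_Mapping.single I 1) c * pvar I"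
proof -
  have "m - Poly_Mapping.single I 1 + Poly_Mapping.single I 1 = m"
    using assms by (intro poly_mapping_eqI) (auto simp: lookup_add lookup_minus lookup_single in_keys_iff when_def)
  then show ?thesis unfolding pvar_def by (simp add: mult_single)
qed

lemma in_ideal_gen_pvar_if_monomials_meet:
  assumes p: "p \<in> An n" and meet: "\<forall>m\<in>Poly_Mapping.keys p. Poly_Mapping.keys m \<inter> V \<noteq> {}"
  shows "p \<in> ideal_gen (An n) (pvar ` V)"
proof (subst monomial_expansion, rule ideal_gen_sum)
  fix m assume m: "m \<in> Poly_Mapping.keys p"
  then obtain I where I: "I \<in> Poly_Mapping.keys m" "I \<in> V" using meet by blast
  have "Poly_Mapping.keys (m - Poly_Mapping.single I 1) \<subseteq> Poly_Mapping.keys m"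
    by (auto simp: in_keys_iff lookup_minus)
  then have "Poly_Mapping.single (m - Poly_Mapping.single I 1) (Poly_Mapping.lookup p m) \<in> An n"
    using p m unfolding An_def by auto
  then show "Poly_Mapping.single m (Poly_Mapping.lookup p m) \<in> ideal_gen (An n) (pvar ` V)"
    unfolding single_eq_single_mult_pvar[OF I(1)] using I(2) by (intro ideal_gen_mult_generator) auto
qed simp

section \<open>Weight components and initial forms\<close>

definition wcomp :: "nat \<Rightarrow> nat \<Rightarrow> cpoly \<Rightarrow> cpoly" where
  "wcomp n d f = Poly_Mapping.mapp (\<lambda>m a. if wmono n m = d then a else 0) f"

definition w_homogeneous :: "nat \<Rightarrow> cpoly \<Rightarrow> bool" where
  "w_homogeneous n s \<longleftrightarrow> (\<exists>e. \<forall>m\<in>Poly_Mapping.keys s. wmono n m = e)"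

lemma lookup_wcomp:
  "Poly_Mapping.lookup (wcomp n d f) m = (if wmono n m = d then Poly_Mapping.lookup f m else 0)"
  unfolding wcomp_def lookup_mapp by (auto simp: when_def in_keys_iff)

lemma keys_wcomp: "Poly_Mapping.keys (wcomp n d f) = {m \<in> Poly_Mapping.keys f. wmono n m = d}"
  by (auto simp: in_keys_iff lookup_wcomp split: if_splits)

lemma in_w_eq_wcomp: "in_w n f = wcomp n (Min (wmono n ` Poly_Mapping.keys f)) f"
  unfolding in_w_def wcomp_def ..

lemma wcomp_add: "wcomp n d (f + g) = wcomp n d f + wcomp n d g"
  by (rule poly_mapping_eqI) (simp add: lookup_wcomp lookup_add)

lemma wcomp_sum: "wcomp n d (\<Sum>x\<in>A. f x) = (\<Sum>x\<in>A. wcomp n d (f x))"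
  by (rule poly_mapping_eqI) (simp add: lookup_wcomp lookup_sum)

lemma wcomp_eq_self: "\<forall>m\<in>Poly_Mapping.keys f. wmono n m = d \<Longrightarrow> wcomp n d f = f"
  by (rule poly_mapping_eqI) (auto simp add: lookup_wcomp in_keys_iff)

lemma wcomp_eq_zero: "\<forall>m\<in>Poly_Mapping.keys f. wmono n m \<noteq> d \<Longrightarrow> wcomp n d f = 0"
  by (rule poly_mapping_eqI) (auto simp add: lookup_wcomp in_keys_iff)

lemma wcomp_wcomp: "wcomp n d (wcomp n d f) = wcomp n d f"
  by (rule poly_mapping_eqI) (simp add: lookup_wcomp)

lemma wcomp_An: "f \<in> An n \<Longrightarrow> wcomp n d f \<in> An n"
  by (rule An_keys_subset) (auto simp: keys_wcomp)

lemma w_homogeneous_wcomp: "w_homogeneous n (wcomp n d f)"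
  unfolding w_homogeneous_def by (auto simp: keys_wcomp)

lemma wcomp_w_homogeneous: "w_homogeneous n s \<Longrightarrow> wcomp n d s = s \<or> wcomp n d s = 0"
  unfolding w_homogeneous_def using wcomp_eq_self wcomp_eq_zero by metis

lemma wmono_add: "wmono n (a + b) = wmono n a + wmono n b"
proof -
  let ?S = "Poly_Mapping.keys a \<union> Poly_Mapping.keys b"
  have extend: "wmono n m = (\<Sum>I\<in>?S. Poly_Mapping.lookup m I * wvar n I)"
    if "Poly_Mapping.keys m \<subseteq> ?S" for m
    unfolding wmono_def using that by (intro sum.mono_neutral_left) (auto simp: in_keys_iff)
  show ?thesis
    using extend[of "a + b"] extend[of a] extend[of b] keys_add[of a b]
    by (simp add: lookup_add distrib_right sum.distrib)
qed

lemma wmono_single: "wmono n (Poly_Mapping.single I k) = k * wvar n I"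
  unfolding wmono_def by simp

lemma wcomp_mult_w_homogeneous:
  assumes g: "\<forall>m\<in>Poly_Mapping.keys g. wmono n m = e"
  shows "wcomp n d (f * g) = (if e \<le> d then wcomp n (d - e) f * g else 0)"
proof (cases "e \<le> d")
  case True
  define h where "h = wcomp n (d - e) f"
  have "wcomp n d (h * g) = h * g"
  proof (intro wcomp_eq_self ballI)
    fix m assume "m \<in> Poly_Mapping.keys (h * g)"
    then obtain a b where "m = a + b" "a \<in> Poly_Mapping.keys h" "b \<in> Poly_Mapping.keys g"
      using keys_mult[of h g] by auto
    then show "wmono n m = d" using g True by (simp add: wmono_add h_def keys_wcomp)
  qed
  moreover have "wcomp n d ((f - h) * g) = 0"
  proof (intro wcomp_eq_zero ballI)
    fix m assume "m \<in> Poly_Mapping.keys ((f - h) * g)"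
    then obtain a b where ab: "m = a + b" "a \<in> Poly_Mapping.keys (f - h)" "b \<in> Poly_Mapping.keys g"
      using keys_mult[of "f - h" g] by auto
    then have "wmono n a \<noteq> d - e" by (auto simp: h_def in_keys_iff lookup_minus lookup_wcomp)
    then show "wmono n m \<noteq> d" using g True ab by (auto simp add: wmono_add)
  qed
  moreover have "f * g = h * g + (f - h) * g" by (simp add: algebra_simps)
  ultimately have "wcomp n d (f * g) = h * g" by (simp add: wcomp_add)
  then show ?thesis using True h_def by simp
next
  case False
  have "wcomp n d (f * g) = 0"
  proof (intro wcomp_eq_zero ballI)
    fix m assume "m \<in> Poly_Mapping.keys (f * g)"
    then obtain a b where "m = a + b" "b \<in> Poly_Mapping.keys g"
      using keys_mult[of f g] by auto
    then show "wmono n m \<noteq> d" using g False by (auto simp add: wmono_add)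
  qed
  then show ?thesis using False by simp
qed

lemma sum_wcomp:
  assumes "finite D" "wmono n ` Poly_Mapping.keys f \<subseteq> D"
  shows "(\<Sum>d\<in>D. wcomp n d f) = f"
proof (rule poly_mapping_eqI)
  fix m
  have "(\<Sum>d\<in>D. Poly_Mapping.lookup (wcomp n d f) m) = (if wmono n m \<in> D then Poly_Mapping.lookup f m else 0)"
    using assms(1) by (simp add: lookup_wcomp sum.delta)
  also have "\<dots> = Poly_Mapping.lookup f m"
    using assms(2) by (metis (mono_tags) image_subset_iff in_keys_iff)
  finally show "Poly_Mapping.lookup (\<Sum>d\<in>D. wcomp n d f) m = Poly_Mapping.lookup f m"
    by (simp add: lookup_sum)
qed

lemma in_w_wcomp: "in_w n (wcomp n d f) = wcomp n d f"
proof (cases "wcomp n d f = 0")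
  case True
  then show ?thesis by (simp add: in_w_def poly_mapping_eq_iff lookup_mapp fun_eq_iff)
next
  case False
  then have "Poly_Mapping.keys (wcomp n d f) \<noteq> {}" by simp
  then have "wmono n ` Poly_Mapping.keys (wcomp n d f) = {d}" by (auto simp: keys_wcomp)
  then show ?thesis by (simp add: in_w_eq_wcomp wcomp_wcomp)
qed

lemma wcomp_in_ideal_gen_w_homogeneous:
  assumes "\<forall>s\<in>S. w_homogeneous n s" "f \<in> ideal_gen (An n) S"
  shows "wcomp n d f \<in> ideal_gen (An n) S"
proof -
  obtain F g where F: "finite F" "F \<subseteq> S" "\<forall>s\<in>F. g s \<in> An n" "f = (\<Sum>s\<in>F. g s * s)"
    using assms(2) unfolding ideal_gen_def by blast
  have "wcomp n d (g s * s) \<in> ideal_gen (An n) S" if s: "s \<in> F" for s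
  proof -
    obtain e where "\<forall>m\<in>Poly_Mapping.keys s. wmono n m = e"
      using assms(1) F(2) s unfolding w_homogeneous_def by blast
    then have "wcomp n d (g s * s) = (if e \<le> d then wcomp n (d - e) (g s) * s else 0)"
      by (rule wcomp_mult_w_homogeneous)
    then show ?thesis using s F(2,3)
      by (auto intro!: ideal_gen_mult_generator wcomp_An ideal_gen_zero)
  qed
  then show ?thesis unfolding F(4) wcomp_sum using F(1) by (intro ideal_gen_sum)
qed

lemma ideal_gen_w_homogeneous_eq_in_w_ideal:
  assumes hom: "\<forall>s\<in>S. w_homogeneous n s"
  shows "ideal_gen (An n) S = in_w_ideal n (ideal_gen (An n) S)"
proof
  let ?I = "ideal_gen (An n) S"
  show "?I \<subseteq> in_w_ideal n ?I"
  proof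
    fix f assume f: "f \<in> ?I"
    have "wcomp n d f \<in> in_w n ` ?I" for d
      using wcomp_in_ideal_gen_w_homogeneous[OF hom f] in_w_wcomp[of n d f] by (metis image_eqI)
    then have "(\<Sum>d\<in>wmono n ` Poly_Mapping.keys f. wcomp n d f) \<in> in_w_ideal n ?I"
      unfolding in_w_ideal_def by (intro ideal_gen_sum generator_in_ideal_gen) simp_all
    then show "f \<in> in_w_ideal n ?I" by (simp add: sum_wcomp)
  qed
  show "in_w_ideal n ?I \<subseteq> ?I"
    unfolding in_w_ideal_def
  proof (intro ideal_gen_subset_ideal_gen image_subsetI)
    fix f assume "f \<in> ?I"
    then show "in_w n f \<in> ?I"
      unfolding in_w_eq_wcomp by (rule wcomp_in_ideal_gen_w_homogeneous[OF hom])
  qed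
qed

lemma ideal_gen_eq_in_w_ideal_if_wcomp_in:
  assumes comp: "\<And>s d. s \<in> S \<Longrightarrow> wcomp n d s \<in> ideal_gen (An n) S"
  shows "ideal_gen (An n) S = in_w_ideal n (ideal_gen (An n) S)"
proof -
  let ?H = "{wcomp n d s | s d. s \<in> S}"
  have "S \<subseteq> ideal_gen (An n) ?H"
  proof
    fix s assume "s \<in> S"
    then have "(\<Sum>d\<in>wmono n ` Poly_Mapping.keys s. wcomp n d s) \<in> ideal_gen (An n) ?H"
      by (intro ideal_gen_sum generator_in_ideal_gen) (simp, blast)
    then show "s \<in> ideal_gen (An n) ?H" by (simp add: sum_wcomp)
  qed
  moreover have "?H \<subseteq> ideal_gen (An n) S" using comp by blast
  ultimately have eq: "ideal_gen (An n) S = ideal_gen (An n) ?H"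
    using ideal_gen_subset_ideal_gen by blast
  have "\<forall>s\<in>?H. w_homogeneous n s" using w_homogeneous_wcomp by blast
  then show ?thesis unfolding eq by (rule ideal_gen_w_homogeneous_eq_in_w_ideal)
qed

lemma wcomp_in_ideal_gen_if_other_wcomps:
  assumes f: "f \<in> ideal_gen (An n) S"
    and others: "\<And>d. d \<noteq> d0 \<Longrightarrow> wcomp n d f \<in> ideal_gen (An n) S"
  shows "wcomp n d0 f \<in> ideal_gen (An n) S"
proof -
  let ?D = "insert d0 (wmono n ` Poly_Mapping.keys f)"
  have "f = (\<Sum>d\<in>?D. wcomp n d f)" by (rule sum_wcomp[symmetric]) auto
  also have "\<dots> = wcomp n d0 f + (\<Sum>d\<in>?D - {d0}. wcomp n d f)" by (rule sum.remove) auto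
  finally have "wcomp n d0 f = f - (\<Sum>d\<in>?D - {d0}. wcomp n d f)"
    by (rule eq_diff_eq[THEN iffD2, OF sym])
  also have "\<dots> \<in> ideal_gen (An n) S"
    using others by (intro ideal_gen_diff[OF f] ideal_gen_sum) simp_all
  finally show ?thesis .
qed

section \<open>Monomials of the Pluecker relations\<close>

lemma keys_pseq_mult_pseq:
  "Poly_Mapping.keys (pseq X * pseq Y) \<subseteq>
     (if distinct X \<and> distinct Y then {Poly_Mapping.single (set X) 1 + Poly_Mapping.single (set Y) 1} else {})"
proof -
  have "distinct X \<Longrightarrow> pseq X = Poly_Mapping.single (Poly_Mapping.single (set X) 1) ((-1) ^ list_inv X)" for X
    unfolding pseq_def pvar_def by (cases "even (list_inv X)") (simp_all add: single_uminus)
  then show ?thesis by (auto simp: pseq_def mult_single)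
qed

lemma mset_foldr_list_update:
  assumes "\<forall>t<k. p t < length L" and "\<forall>t<k. \<forall>t'<k. p t = p t' \<longrightarrow> t = t'"
  shows "mset (foldr (\<lambda>t l. l[p t := J ! t]) [0..<k] L) + mset (map (\<lambda>t. L ! p t) [0..<k])
     = mset L + mset (map (\<lambda>t. J ! t) [0..<k])"
  using assms
proof (induction k arbitrary: L)
  case 0
  then show ?case by simp
next
  case (Suc k)
  define L' where "L' = L[p k := J ! k]"
  have IH: "mset (foldr (\<lambda>t l. l[p t := J ! t]) [0..<k] L') + mset (map (\<lambda>t. L' ! p t) [0..<k])
      = mset L' + mset (map (\<lambda>t. J ! t) [0..<k])"
    using Suc.prems by (intro Suc.IH) (auto simp: L'_def)
  have "map (\<lambda>t. L' ! p t) [0..<k] = map (\<lambda>t. L ! p t) [0..<k]"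
  proof (rule map_cong[OF refl])
    fix t assume "t \<in> set [0..<k]"
    then have "p t \<noteq> p k" using Suc.prems(2) by (metis atLeastLessThan_iff less_Suc_eq less_irrefl set_upt)
    then show "L' ! p t = L ! p t" by (simp add: L'_def)
  qed
  then have map_Suc: "map (\<lambda>t. L ! p t) [0..<Suc k] = map (\<lambda>t. L' ! p t) [0..<k] @ [L ! p k]"
    by simp
  have foldr_Suc: "foldr (\<lambda>t l. l[p t := J ! t]) [0..<Suc k] L = foldr (\<lambda>t l. l[p t := J ! t]) [0..<k] L'"
    by (simp add: L'_def)
  have "mset (foldr (\<lambda>t l. l[p t := J ! t]) [0..<Suc k] L) + mset (map (\<lambda>t. L ! p t) [0..<Suc k])
      = mset (foldr (\<lambda>t l. l[p t := J ! t]) [0..<k] L') + mset (map (\<lambda>t. L' ! p t) [0..<k]) + {#L ! p k#}"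
    unfolding map_Suc foldr_Suc by (simp add: ac_simps)
  also have "\<dots> = (mset L' + {#L ! p k#}) + mset (map (\<lambda>t. J ! t) [0..<k])"
    using IH by (simp add: ac_simps)
  also have "mset L' + {#L ! p k#} = mset L + {#J ! k#}"
    using Suc.prems(1) by (simp add: L'_def mset_update insert_DiffM nth_mem)
  finally show ?case by (simp add: ac_simps)
qed

lemma length_foldr_list_update: "length (foldr (\<lambda>t l. l[p t := J ! t]) ts L) = length L"
  by (induction ts) auto

lemma mset_Jrep_Lrep:
  assumes R: "R \<subseteq> {0..<length L}" "card R = k" and k: "k \<le> length J"
  shows "mset (Jrep J L k R @ Lrep J L k R) = mset (J @ L)"
    and "length (Jrep J L k R) = length J" and "length (Lrep J L k R) = length L"
proof -
  define p where "p t = sorted_list_of_set R ! t" for t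
  have fin: "finite R" using R(1) finite_subset by blast
  have len: "length (sorted_list_of_set R) = k" using R(2) by simp
  have "p t < length L" if "t < k" for t
    using that len fin R(1) nth_mem[of t "sorted_list_of_set R"] unfolding p_def by auto
  moreover have "\<forall>t<k. \<forall>t'<k. p t = p t' \<longrightarrow> t = t'"
    unfolding p_def using len distinct_sorted_list_of_set[of R] nth_eq_iff_index_eq by blast
  moreover have "map (\<lambda>t. J ! t) [0..<k] = take k J"
    using k by (intro nth_equalityI) auto
  ultimately have "mset (Lrep J L k R) + mset (map (\<lambda>t. L ! p t) [0..<k]) = mset L + mset (take k J)"
    using mset_foldr_list_update[of k p L J] unfolding Lrep_def p_def by simp
  moreover have "mset J = mset (take k J) + mset (drop k J)"
    by (metis append_take_drop_id mset_append)
  ultimately show "mset (Jrep J L k R @ Lrep J L k R) = mset (J @ L)"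
    unfolding Jrep_def p_def by (simp add: ac_simps)
  show "length (Jrep J L k R) = length J" unfolding Jrep_def using k by simp
  show "length (Lrep J L k R) = length L" unfolding Lrep_def by (rule length_foldr_list_update)
qed

lemma keys_pseq_mult_pseqD:
  assumes "m \<in> Poly_Mapping.keys (pseq X * pseq Y)"
  shows "distinct X" "distinct Y" "m = Poly_Mapping.single (set X) 1 + Poly_Mapping.single (set Y) 1"
  using assms keys_pseq_mult_pseq[of X Y] by (auto split: if_splits)

lemma keys_plucker_rel:
  assumes k: "k \<le> length J" and m: "m \<in> Poly_Mapping.keys (plucker_rel J L k)"
  obtains X Y where "distinct X" "distinct Y" "length X = length J" "length Y = length L"
    "mset (X @ Y) = mset (J @ L)" "m = Poly_Mapping.single (set X) 1 + Poly_Mapping.single (set Y) 1"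
proof -
  let ?Rs = "{R. R \<subseteq> {0..<length L} \<and> card R = k}"
  have "m \<in> Poly_Mapping.keys (pseq J * pseq L) \<union>
      Poly_Mapping.keys (\<Sum>R\<in>?Rs. pseq (Jrep J L k R) * pseq (Lrep J L k R))"
    using m keys_diff[of "pseq J * pseq L"] unfolding plucker_rel_def by blast
  then show thesis
  proof
    assume "m \<in> Poly_Mapping.keys (pseq J * pseq L)"
    note JL = keys_pseq_mult_pseqD[OF this]
    show thesis by (rule that[OF JL(1,2) refl refl refl JL(3)])
  next
    assume "m \<in> Poly_Mapping.keys (\<Sum>R\<in>?Rs. pseq (Jrep J L k R) * pseq (Lrep J L k R))"
    then obtain R where R: "R \<in> ?Rs" "m \<in> Poly_Mapping.keys (pseq (Jrep J L k R) * pseq (Lrep J L k R))"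
      using keys_sum[of "\<lambda>R. pseq (Jrep J L k R) * pseq (Lrep J L k R)" ?Rs] by blast
    note XY = keys_pseq_mult_pseqD[OF R(2)]
    have "R \<subseteq> {0..<length L}" "card R = k" using R(1) by auto
    note XY' = mset_Jrep_Lrep[OF this k]
    show thesis by (rule that[OF XY(1,2) XY'(2,3,1) XY(3)])
  qed
qed

lemma keys_single_add_single:
  "Poly_Mapping.keys (Poly_Mapping.single A (1::nat) + Poly_Mapping.single B 1) = {A, B}"
  by (auto simp: in_keys_iff lookup_add lookup_single when_def split: if_splits)

lemma plucker_rels_monomials:
  assumes "r \<in> plucker_rels n"
  shows "\<exists>M. \<forall>m\<in>Poly_Mapping.keys r. \<exists>X Y. distinct X \<and> distinct Y \<and>
      set X \<in> pvars n \<and> set Y \<in> pvars n \<and> mset (X @ Y) = M \<and>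
      m = Poly_Mapping.single (set X) 1 + Poly_Mapping.single (set Y) 1"
proof -
  obtain J L k where r: "r = plucker_rel J L k" and JL: "set J \<subseteq> {1..n}" "set L \<subseteq> {1..n}"
      "1 \<le> length J" "length J \<le> length L" "length L \<le> n - 1" "k \<le> length J"
    using assms unfolding plucker_rels_def by blast
  have "\<exists>X Y. distinct X \<and> distinct Y \<and> set X \<in> pvars n \<and> set Y \<in> pvars n \<and>
      mset (X @ Y) = mset (J @ L) \<and> m = Poly_Mapping.single (set X) 1 + Poly_Mapping.single (set Y) 1"
    if "m \<in> Poly_Mapping.keys r" for m
  proof -
    from that have "m \<in> Poly_Mapping.keys (plucker_rel J L k)" by (simp only: r)
    then obtain X Y where XY: "distinct X" "distinct Y" "length X = length J" "length Y = length L"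
        "mset (X @ Y) = mset (J @ L)" "m = Poly_Mapping.single (set X) 1 + Poly_Mapping.single (set Y) 1"
      by (rule keys_plucker_rel[OF JL(6)])
    have "set (X @ Y) = set (J @ L)" using XY(5) by (metis set_mset_mset)
    then have "set X \<subseteq> {1..n}" "set Y \<subseteq> {1..n}" using JL(1,2) by auto
    moreover have "card (set X) = length J" "card (set Y) = length L"
      using XY(1-4) by (simp_all add: distinct_card)
    ultimately have "set X \<in> pvars n" "set Y \<in> pvars n"
      using JL(3-5) unfolding pvars_def by auto
    then show ?thesis using XY by blast
  qed
  then show ?thesis by blast
qed

lemma plucker_rels_subset_An: "plucker_rels n \<subseteq> An n"
proof
  fix r assume "r \<in> plucker_rels n"
  then obtain M where M: "\<forall>m\<in>Poly_Mapping.keys r. \<exists>X Y. distinct X \<and> distinct Y \<and>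
      set X \<in> pvars n \<and> set Y \<in> pvars n \<and> mset (X @ Y) = M \<and>
      m = Poly_Mapping.single (set X) 1 + Poly_Mapping.single (set Y) 1"
    using plucker_rels_monomials by blast
  show "r \<in> An n"
    unfolding An_def
  proof (intro CollectI ballI)
    fix m assume "m \<in> Poly_Mapping.keys r"
    then obtain X Y where "set X \<in> pvars n" "set Y \<in> pvars n"
        "m = Poly_Mapping.single (set X) 1 + Poly_Mapping.single (set Y) 1"
      using M by blast
    then show "Poly_Mapping.keys m \<subseteq> pvars n"
      using keys_single_add_single[of "set X" "set Y"] by auto
  qed
qed

text \<open>The common weight is 2 minus the number of occurrences of n in the index sequences
  of the relation.\<close>

lemma plucker_rel_weight_const_off:
  assumes r: "r \<in> plucker_rels n"
    and wK: "\<And>I. I \<in> pvars n \<Longrightarrow> I \<notin> K \<Longrightarrow> wvar n I = (if n \<in> I then 0 else 1)"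
  shows "\<exists>d0. \<forall>m\<in>Poly_Mapping.keys r. Poly_Mapping.keys m \<inter> K = {} \<longrightarrow> wmono n m = d0"
proof -
  obtain M where M: "\<forall>m\<in>Poly_Mapping.keys r. \<exists>X Y. distinct X \<and> distinct Y \<and>
      set X \<in> pvars n \<and> set Y \<in> pvars n \<and> mset (X @ Y) = M \<and>
      m = Poly_Mapping.single (set X) 1 + Poly_Mapping.single (set Y) 1"
    using plucker_rels_monomials[OF r] by blast
  have "wmono n m = 2 - count M n"
    if m: "m \<in> Poly_Mapping.keys r" and off: "Poly_Mapping.keys m \<inter> K = {}" for m
  proof -
    obtain X Y where XY: "distinct X" "distinct Y" "set X \<in> pvars n" "set Y \<in> pvars n"
        "mset (X @ Y) = M" "m = Poly_Mapping.single (set X) 1 + Poly_Mapping.single (set Y) 1"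
      using M m by blast
    have "Poly_Mapping.keys m = {set X, set Y}"
      unfolding XY(6) by (rule keys_single_add_single)
    then have "set X \<notin> K" "set Y \<notin> K" using off by auto
    then have "wmono n m = (if n \<in> set X then 0 else 1) + (if n \<in> set Y then 0 else 1)"
      using XY(3,4) wK by (simp add: XY(6) wmono_add wmono_single)
    moreover have "count M n = (if n \<in> set X then 1 else 0) + (if n \<in> set Y then 1 else 0)"
      using XY(1,2) by (simp add: XY(5)[symmetric] distinct_count_atmost_1)
    ultimately show ?thesis by simp
  qed
  then show ?thesis by blast
qed

lemma wcomp_in_ideal_gen_plucker_pvar:
  assumes wK: "\<And>I. I \<in> pvars n \<Longrightarrow> I \<notin> K \<Longrightarrow> wvar n I = (if n \<in> I then 0 else 1)"
    and s: "s \<in> plucker_rels n \<union> pvar ` K"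
  shows "wcomp n d s \<in> ideal_gen (An n) (plucker_rels n \<union> pvar ` K)"
proof (cases "s \<in> plucker_rels n")
  case True
  obtain d0 where d0: "\<forall>m\<in>Poly_Mapping.keys s. Poly_Mapping.keys m \<inter> K = {} \<longrightarrow> wmono n m = d0"
    using plucker_rel_weight_const_off[OF True wK] by blast
  have others: "wcomp n d' s \<in> ideal_gen (An n) (plucker_rels n \<union> pvar ` K)" if "d' \<noteq> d0" for d'
  proof -
    have "wcomp n d' s \<in> ideal_gen (An n) (pvar ` K)"
    proof (rule in_ideal_gen_pvar_if_monomials_meet)
      show "wcomp n d' s \<in> An n" using True plucker_rels_subset_An by (blast intro: wcomp_An)
      show "\<forall>m\<in>Poly_Mapping.keys (wcomp n d' s). Poly_Mapping.keys m \<inter> K \<noteq> {}"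
        using d0 that by (auto simp: keys_wcomp)
    qed
    then show ?thesis
      using ideal_gen_subset_ideal_gen[of "pvar ` K" n "plucker_rels n \<union> pvar ` K"]
      by (blast intro: generator_in_ideal_gen)
  qed
  have "s \<in> ideal_gen (An n) (plucker_rels n \<union> pvar ` K)"
    using True by (blast intro: generator_in_ideal_gen)
  then have "wcomp n d0 s \<in> ideal_gen (An n) (plucker_rels n \<union> pvar ` K)"
    using others by (rule wcomp_in_ideal_gen_if_other_wcomps)
  with others show ?thesis by (cases "d = d0") simp_all
next
  case False
  then obtain I where "s = pvar I" using s by blast
  then have "w_homogeneous n s" unfolding w_homogeneous_def pvar_def by simp
  then show ?thesis
    using wcomp_w_homogeneous[of n s d] s by (auto intro: generator_in_ideal_gen ideal_gen_zero)
qed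

section \<open>Permutations below the Coxeter element\<close>

text \<open>For a permutation this says that v([k]) contains [k - 1] for every k \<le> n
  (lemma prefix_subset_image_if_drops_at_most_one below).\<close>

definition drops_at_most_one :: "nat \<Rightarrow> (nat \<Rightarrow> nat) \<Rightarrow> bool" where
  "drops_at_most_one n u \<longleftrightarrow> (\<forall>a\<in>{1..n}. u a < n \<longrightarrow> a \<le> Suc (u a))"

lemma coxc_Suc: "1 \<le> n \<Longrightarrow> coxc (Suc n) = sref n \<circ> coxc n"
  unfolding coxc_def sprod_def by simp

lemma coxc_apply: "1 \<le> n \<Longrightarrow> (\<forall>m>n. coxc n m = m) \<and> (\<forall>t. 1 \<le> t \<and> t < n \<longrightarrow> coxc n (Suc t) = t)"
proof (induction n rule: nat_induct_at_least)
  case base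
  then show ?case by (simp add: coxc_def sprod_def)
next
  case (Suc n)
  then show ?case
    by (auto simp: coxc_Suc sref_def transpose_def less_Suc_eq)
qed

lemma drops_at_most_one_coxc: "drops_at_most_one n (coxc n)"
  unfolding drops_at_most_one_def
proof (intro ballI impI)
  fix a assume a: "a \<in> {1..n}"
  show "a \<le> Suc (coxc n a)"
  proof (cases a)
    case (Suc t)
    then show ?thesis using a coxc_apply[of n] by (cases "t = 0") auto
  qed (use a in simp)
qed

lemma inv_count_le_if_swap_descent:
  assumes ij: "1 \<le> i" "i < j" "j \<le> n" and descent: "u j < u i"
  shows "inv_count n (u \<circ> Transposition.transpose i j) \<le> inv_count n u"
proof -
  let ?t = "Transposition.transpose i j"
  define inversions where "inversions f = {(a, b). 1 \<le> a \<and> a < b \<and> b \<le> n \<and> f a > f b}"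
    for f :: "nat \<Rightarrow> nat"
  \<comment> \<open>Pairs (i, b) and (a, j) whose other end lies strictly between i and j are kept;
    all other inversions of u \<circ> (i j) are moved by (i j) to inversions of u.\<close>
  define stays where "stays a b \<longleftrightarrow> (a = i \<and> i < b \<and> b < j) \<or> (b = j \<and> i < a \<and> a < j)" for a b
  define \<phi> where "\<phi> = (\<lambda>(a, b). if stays a b then (a, b) else (?t a, ?t b))"
  have "\<phi> ` inversions (u \<circ> ?t) \<subseteq> inversions u"
    using ij descent unfolding \<phi>_def stays_def inversions_def by (auto simp: transpose_def split: if_splits)
  moreover have "inj_on \<phi> (inversions (u \<circ> ?t))"
    using ij unfolding inj_on_def \<phi>_def stays_def inversions_def by (auto simp: transpose_def split: if_splits)
  moreover have "finite (inversions u)"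
    by (rule finite_subset[of _ "{1..n} \<times> {1..n}"]) (auto simp: inversions_def)
  ultimately have "card (inversions (u \<circ> ?t)) \<le> card (inversions u)"
    using card_inj_on_le by blast
  then show ?thesis unfolding inv_count_def inversions_def .
qed

lemma bruhat_step_swap_ascent:
  assumes step: "bruhat_step n u w" and u: "u permutes {1..n}"
  obtains i j where "1 \<le> i" "i < j" "j \<le> n" "w = u \<circ> Transposition.transpose i j" "u i < u j"
proof -
  obtain i j where ij: "1 \<le> i" "i < j" "j \<le> n" and w: "w = u \<circ> Transposition.transpose i j"
    and more: "inv_count n u < inv_count n w"
    using step unfolding bruhat_step_def by blast
  have "u i \<noteq> u j" using permutes_inj_on[OF u] ij by (auto dest: inj_onD)
  then have "u i < u j" using inv_count_le_if_swap_descent[OF ij, of u] more w by fastforce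
  then show thesis using that ij w by blast
qed

lemma drops_at_most_one_swap_ascent:
  assumes ij: "i < j" "j \<le> n" and ascent: "u i < u j" and uj: "u j \<le> n"
    and w: "drops_at_most_one n (u \<circ> Transposition.transpose i j)"
  shows "drops_at_most_one n u"
  unfolding drops_at_most_one_def
proof (intro ballI impI)
  fix a assume a: "a \<in> {1..n}" "u a < n"
  have "j \<le> Suc (u i)"
    using w ij ascent uj unfolding drops_at_most_one_def by (auto dest!: bspec[of _ _ j])
  moreover have "a \<le> Suc (u a)" if "a \<noteq> i" "a \<noteq> j"
    using w a that unfolding drops_at_most_one_def by (auto dest!: bspec[of _ _ a])
  ultimately show "a \<le> Suc (u a)" using ij ascent by fastforce
qed

lemma drops_at_most_one_if_bruhat_le:
  assumes "bruhat_le n u w"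
  shows "u permutes {1..n} \<Longrightarrow> drops_at_most_one n w \<Longrightarrow> drops_at_most_one n u"
  using assms unfolding bruhat_le_def
proof (induction rule: converse_rtranclp_induct)
  case base
  then show ?case by simp
next
  case (step u z)
  obtain i j where ij: "1 \<le> i" "i < j" "j \<le> n" and z: "z = u \<circ> Transposition.transpose i j"
    and ascent: "u i < u j"
    using bruhat_step_swap_ascent[OF step.hyps(1) step.prems(1)] by blast
  have "z permutes {1..n}"
    unfolding z using ij by (intro permutes_compose[OF _ step.prems(1)] permutes_swap_id) auto
  then have "drops_at_most_one n z" using step.IH step.prems(2) by blast
  moreover have "u j \<le> n" using permutes_in_image[OF step.prems(1), of j] ij by simp
  ultimately show ?case using ij ascent by (intro drops_at_most_one_swap_ascent[of i j n u]) (simp_all add: z)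
qed

section \<open>Surviving Pluecker variables\<close>

lemma prefix_subset_image_if_drops_at_most_one:
  assumes v: "v permutes {1..n}" and drops: "drops_at_most_one n v" and k: "k \<le> n"
  shows "{1..k - 1} \<subseteq> v ` {1..k}"
proof
  fix m assume m: "m \<in> {1..k - 1}"
  then obtain a where a: "a \<in> {1..n}" "v a = m"
    using permutes_image[OF v] k by (metis atLeastAtMost_iff diff_le_self imageE le_trans)
  then have "a \<le> Suc m" using drops m k unfolding drops_at_most_one_def by auto
  then show "m \<in> v ` {1..k}" using a m by auto
qed

lemma Suc_le_sorted_list_of_set_nth:
  assumes "finite A" "0 \<notin> A" "r < card A"
  shows "Suc r \<le> sorted_list_of_set A ! r"
  using assms(3)
proof (induction r)
  case 0
  then have "sorted_list_of_set A ! 0 \<in> A"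
    using assms(1) nth_mem[of 0 "sorted_list_of_set A"] by simp
  then show ?case using assms(2) by (cases "sorted_list_of_set A ! 0") auto
next
  case (Suc r)
  have "sorted_list_of_set A ! r < sorted_list_of_set A ! Suc r"
    using sorted_wrt_nth_less[OF strict_sorted_list_of_set[of A], of r "Suc r"] Suc.prems by simp
  then show ?case using Suc by simp
qed

lemma sorted_list_of_set_nth_le_if_prefix:
  assumes "finite A" "{1..Suc r} \<subseteq> A" "r < card A"
  shows "sorted_list_of_set A ! r \<le> Suc r"
proof (rule ccontr)
  let ?s = "sorted_list_of_set A"
  assume big: "\<not> ?s ! r \<le> Suc r"
  have "{1..Suc r} \<subseteq> (\<lambda>t. ?s ! t) ` {0..<r}"
  proof
    fix y assume y: "y \<in> {1..Suc r}"
    then have "y \<in> set ?s" using assms by auto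
    then obtain t where t: "t < length ?s" "?s ! t = y" by (auto simp: in_set_conv_nth)
    have "t < r"
    proof (rule ccontr)
      assume "\<not> t < r"
      then have "?s ! r \<le> ?s ! t" using sorted_nth_mono[OF sorted_sorted_list_of_set, of r t A] t by simp
      then show False using big t y by simp
    qed
    then show "y \<in> (\<lambda>t. ?s ! t) ` {0..<r}" using t by auto
  qed
  then have "card {1..Suc r} \<le> card {0..<r}"
    by (meson card_image_le card_mono finite_atLeastLessThan finite_imageI le_trans)
  then show False by simp
qed

lemma prefix_subset_if_gale_le:
  assumes I: "finite I" "0 \<notin> I" and K: "finite K" "{1..card I - 1} \<subseteq> K"
    and gale: "gale_le I K"
  shows "{1..card I - 1} \<subseteq> I"
proof
  fix t assume t: "t \<in> {1..card I - 1}"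
  define r where "r = t - 1"
  have r: "r < card I - 1" "Suc r = t" using t unfolding r_def by auto
  have "sorted_list_of_set I ! r \<le> sorted_list_of_set K ! r"
    using gale r unfolding gale_le_def by simp
  also have "\<dots> \<le> Suc r"
    using K r gale unfolding gale_le_def by (intro sorted_list_of_set_nth_le_if_prefix) auto
  finally have "sorted_list_of_set I ! r = t"
    using Suc_le_sorted_list_of_set_nth[OF I, of r] r by simp
  then show "t \<in> I"
    using nth_mem[of r "sorted_list_of_set I"] r I(1) by simp
qed

lemma wvar_if_prefix_subset:
  assumes I: "I \<in> pvars n" and prefix: "{1..card I - 1} \<subseteq> I"
  shows "wvar n I = (if n \<in> I then 0 else 1)"
proof -
  define k where "k = card I"
  have Isub: "I \<subseteq> {1..n}" and k: "1 \<le> k" "k \<le> n - 1" using I unfolding pvars_def k_def by auto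
  have fin: "finite I" using Isub finite_subset by blast
  have one: "card (I - {1..k - 1}) = 1"
    using card_Diff_subset[OF _ prefix] fin k unfolding k_def by simp
  have "{a \<in> I. card I \<le> a \<and> a \<le> n - 1} = (I - {1..k - 1}) - {n}"
    using Isub k unfolding k_def by auto
  then have w: "wvar n I = card ((I - {1..k - 1}) - {n})" unfolding wvar_def by simp
  show ?thesis
  proof (cases "n \<in> I")
    case True
    then have "n \<in> I - {1..k - 1}" using k by auto
    then show ?thesis using True w one fin by simp
  next
    case False
    then show ?thesis using w one by simp
  qed
qed

lemma wvar_if_gale_le_image:
  assumes v: "v permutes {1..n}" and drops: "drops_at_most_one n v"
    and I: "I \<in> pvars n" and gale: "gale_le I (v ` {1..card I})"
  shows "wvar n I = (if n \<in> I then 0 else 1)"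
proof (rule wvar_if_prefix_subset[OF I], rule prefix_subset_if_gale_le[OF _ _ _ _ gale])
  have "I \<subseteq> {1..n}" "card I \<le> n" using I unfolding pvars_def by auto
  then show "finite I" "0 \<notin> I" "{1..card I - 1} \<subseteq> v ` {1..card I}"
    using finite_subset prefix_subset_image_if_drops_at_most_one[OF v drops] by auto
qed simp

theorem proposition3p4:
  fixes n :: nat and v :: "nat \<Rightarrow> nat"
  assumes "n \<ge> 2"
    and "v permutes {1..n}"
    and "bruhat_le n v (coxc n)"
  shows "I_schubert n v = in_w_ideal n (I_schubert n v)"
proof -
  define K where "K = {I \<in> pvars n. \<not> gale_le I (v ` {1..card I})}"
  have "drops_at_most_one n v"
    using drops_at_most_one_if_bruhat_le[OF assms(3,2)] drops_at_most_one_coxc by blast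
  then have surviving_weight: "wvar n I = (if n \<in> I then 0 else 1)" if "I \<in> pvars n" "I \<notin> K" for I
    using wvar_if_gale_le_image[OF assms(2)] that unfolding K_def by blast
  have "{pvar I | I. I \<in> pvars n \<and> \<not> gale_le I (v ` {1..card I})} = pvar ` K"
    unfolding K_def by blast
  then have eq: "I_schubert n v = ideal_gen (An n) (plucker_rels n \<union> pvar ` K)"
    unfolding I_schubert_def by (simp only:)
  have "wcomp n d s \<in> ideal_gen (An n) (plucker_rels n \<union> pvar ` K)"
    if "s \<in> plucker_rels n \<union> pvar ` K" for s d
    by (rule wcomp_in_ideal_gen_plucker_pvar[OF surviving_weight that])
  then show ?thesis unfolding eq by (rule ideal_gen_eq_in_w_ideal_if_wcomp_in)
qed

end
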